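(* In a network satisfying (H1) and (H2) containing the two connected components $Y+S_0\rightleftarrows U_1\to\cdots\rightleftarrows U_L\to Y+S_L$ and $\widetilde Y+S_L\rightleftarrows V_L\to\widetilde Y+S_{L-1}\rightleftarrows\cdots\rightleftarrows V_1\to\widetilde Y+S_0$ ($L\ge1$), with rate constants as in the context, fix $1\le n\le L$ and $0\le k\le n-1$. Let $\ell$ be the minimal positive integer such that a monomial $y^r v_{n-k}$ with some $r\ge0$ appears in $s_n^{(\ell)}$. Then $\ell=2k+1$, $r=k$, and the coefficient of $y^k v_{n-k}$ in $s_n^{(2k+1)}$ is \[\tilde b_{n-k}\prod_{j=0}^{k-1}a_{n-j}\,c_{n-j}\] (empty product $=1$).
   Context: Species are capital letters, concentrations lower-case letters. Mass-action system: $\dot{\mathbf{x}}=\sum_{y\to y'}k_{yy'}\mathbf{x}^y(y'-y)$, rates $k_{yy'}>0$. Total derivative: $\dot\varphi=\sum_i\frac{\partial\varphi}{\partial x_i}\dot x_i$ with $\dot x_i$ replaced by the right-hand side; $\varphi^{(\ell)}$ the $\ell$-th iterate; a monomial appears if its coefficient (a polynomial in rate constants) is nonzero. (H1) Every connected component has the form $Y+S_0\rightleftarrows U_1\to\cdots\rightleftarrows U_L\to Y+S_L$ (reactions $Y+S_{j-1}\to U_j$, $U_j\to Y+S_{j-1}$, $U_j\to Y+S_j$), unique enzyme; intermediates distinct throughout the network; non-intermediates of a component pairwise distinct but may appear in other components; each complex in a unique component. $\mathscr{S}_U$ = substrates/products of the component of intermediate $U$. (H2) A partition $\mathscr{S}^{(0)}\sqcup\cdots\sqcup\mathscr{S}^{(M)}$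 ($M\ge2$, nonempty, $\mathscr{S}^{(0)}$ the intermediates) with: for each intermediate $U$ with enzyme $Y$, some $\alpha\ge1$ has $\mathscr{S}_U\subseteq\mathscr{S}^{(\alpha)}$, $Y\notin\mathscr{S}^{(\alpha)}$. Rates: $Y+S_{j-1}\to U_j$: $a_j$; $U_j\to Y+S_{j-1}$: $b_j$; $U_j\to Y+S_j$: $c_j$; $\widetilde Y+S_j\to V_j$: $\tilde a_j$; $V_j\to\widetilde Y+S_j$: $\tilde b_j$; $V_j\to\widetilde Y+S_{j-1}$: $\tilde c_j$ ($1\le j\le L$). *)

theory Defs
  imports "HOL-Library.Poly_Mapping"
begin

text \<open>A polynomial in variables of type 'v is a finitely supported map from monomials
(finitely supported exponent vectors 'v \<Rightarrow>0 nat) to integer coefficients; the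
convolution product of HOL-Library.Poly_Mapping makes this the polynomial ring.\<close>

type_synonym 'v mpoly = "('v \<Rightarrow>\<^sub>0 nat) \<Rightarrow>\<^sub>0 int"

definition mp_var :: "'v \<Rightarrow> 'v mpoly" where
  "mp_var v = Poly_Mapping.single (Poly_Mapping.single v 1) 1"

definition mp_monom :: "('v \<Rightarrow>\<^sub>0 nat) \<Rightarrow> int \<Rightarrow> 'v mpoly" where
  "mp_monom m c = Poly_Mapping.single m c"

definition mp_pderiv :: "'v \<Rightarrow> 'v mpoly \<Rightarrow> 'v mpoly" where
  "mp_pderiv v p = (\<Sum>m\<in>Poly_Mapping.keys p.
      mp_monom (m - Poly_Mapping.single v 1) (int (Poly_Mapping.lookup m v) * Poly_Mapping.lookup p m))"

text \<open>Polynomial variables: concentrations of species (Inl s) and rate constants,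
one for each reaction, indexed by reaction labels (Inr r).\<close>

datatype rkind = RA | RB | RC

text \<open>A network is given by a finite set C of components; component c has enzyme
enz c, substrates sub c 0, ..., sub c (len c), intermediates imd c 1, ..., imd c (len c),
and reactions
  (c,j,RA):  enz c + sub c (j-1) \<rightarrow> imd c j   (rate a_j)
  (c,j,RB):  imd c j \<rightarrow> enz c + sub c (j-1)   (rate b_j)
  (c,j,RC):  imd c j \<rightarrow> enz c + sub c j       (rate c_j)
for 1 \<le> j \<le> len c.  Complexes are lists of species (as multisets).\<close>

type_synonym 'c rlabel = "'c \<times> nat \<times> rkind"

definition rlabels :: "'c set \<Rightarrow> ('c \<Rightarrow> nat) \<Rightarrow> 'c rlabel set" where
  "rlabels C len = {(c, j, \<kappa>). c \<in> C \<and> 1 \<le> j \<and> j \<le> len c}"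

fun reactant :: "('c \<Rightarrow> 's) \<Rightarrow> ('c \<Rightarrow> nat \<Rightarrow> 's) \<Rightarrow> ('c \<Rightarrow> nat \<Rightarrow> 's) \<Rightarrow> 'c rlabel \<Rightarrow> 's list" where
  "reactant enz sub imd (c, j, RA) = [enz c, sub c (j - 1)]"
| "reactant enz sub imd (c, j, RB) = [imd c j]"
| "reactant enz sub imd (c, j, RC) = [imd c j]"

fun product :: "('c \<Rightarrow> 's) \<Rightarrow> ('c \<Rightarrow> nat \<Rightarrow> 's) \<Rightarrow> ('c \<Rightarrow> nat \<Rightarrow> 's) \<Rightarrow> 'c rlabel \<Rightarrow> 's list" where
  "product enz sub imd (c, j, RA) = [imd c j]"
| "product enz sub imd (c, j, RB) = [enz c, sub c (j - 1)]"
| "product enz sub imd (c, j, RC) = [enz c, sub c j]"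

definition cmon :: "'s list \<Rightarrow> ('s + 'r \<Rightarrow>\<^sub>0 nat)" where
  "cmon y = sum_list (map (\<lambda>s. Poly_Mapping.single (Inl s) 1) y)"

definition complex_of :: "'s list \<Rightarrow> 's \<Rightarrow>\<^sub>0 nat" where
  "complex_of y = sum_list (map (\<lambda>s. Poly_Mapping.single s 1) y)"

definition species :: "'c set \<Rightarrow> ('c \<Rightarrow> 's) \<Rightarrow> ('c \<Rightarrow> nat \<Rightarrow> 's) \<Rightarrow> ('c \<Rightarrow> nat \<Rightarrow> 's)
    \<Rightarrow> ('c \<Rightarrow> nat) \<Rightarrow> 's set" where
  "species C enz sub imd len =
     enz ` C \<union> {sub c j | c j. c \<in> C \<and> j \<le> len c} \<union> {imd c j | c j. c \<in> C \<and> 1 \<le> j \<and> j \<le> len c}"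

definition intermediates :: "'c set \<Rightarrow> ('c \<Rightarrow> nat \<Rightarrow> 's) \<Rightarrow> ('c \<Rightarrow> nat) \<Rightarrow> 's set" where
  "intermediates C imd len = {imd c j | c j. c \<in> C \<and> 1 \<le> j \<and> j \<le> len c}"

definition H1 :: "'c set \<Rightarrow> ('c \<Rightarrow> 's) \<Rightarrow> ('c \<Rightarrow> nat \<Rightarrow> 's) \<Rightarrow> ('c \<Rightarrow> nat \<Rightarrow> 's)
    \<Rightarrow> ('c \<Rightarrow> nat) \<Rightarrow> bool" where
  "H1 C enz sub imd len \<longleftrightarrow>
     finite C \<and>
     (\<forall>c\<in>C. 1 \<le> len c) \<and>
     \<comment> \<open>intermediates are distinct throughout the network: each occurs only as
        the intermediate of one component at one position, and is no enzyme or substrate\<close>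
     (\<forall>c\<in>C. \<forall>c'\<in>C. \<forall>j j'. 1 \<le> j \<and> j \<le> len c \<and> 1 \<le> j' \<and> j' \<le> len c' \<and> imd c j = imd c' j'
         \<longrightarrow> c = c' \<and> j = j') \<and>
     (\<forall>c\<in>C. \<forall>j. 1 \<le> j \<and> j \<le> len c \<longrightarrow> imd c j \<notin> enz ` C \<union> {sub c' i | c' i. c' \<in> C \<and> i \<le> len c'}) \<and>
     \<comment> \<open>non-intermediates of one component are pairwise distinct\<close>
     (\<forall>c\<in>C. inj_on (sub c) {0..len c} \<and> enz c \<notin> sub c ` {0..len c}) \<and>
     \<comment> \<open>each complex lies in a unique component\<close>
     (\<forall>c\<in>C. \<forall>c'\<in>C. \<forall>j j'. j \<le> len c \<and> j' \<le> len c' \<and>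
         complex_of [enz c, sub c j] = complex_of [enz c', sub c' j'] \<longrightarrow> c = c')"

definition H2 :: "'c set \<Rightarrow> ('c \<Rightarrow> 's) \<Rightarrow> ('c \<Rightarrow> nat \<Rightarrow> 's) \<Rightarrow> ('c \<Rightarrow> nat \<Rightarrow> 's)
    \<Rightarrow> ('c \<Rightarrow> nat) \<Rightarrow> bool" where
  "H2 C enz sub imd len \<longleftrightarrow>
     (\<exists>(M::nat) (cls :: 's \<Rightarrow> nat). 2 \<le> M \<and>
        cls ` species C enz sub imd len = {0..M} \<and>
        (\<forall>s\<in>species C enz sub imd len. cls s = 0 \<longleftrightarrow> s \<in> intermediates C imd len) \<and>
        (\<forall>c\<in>C. \<exists>\<alpha>. 1 \<le> \<alpha> \<and> (\<forall>j\<le>len c. cls (sub c j) = \<alpha>) \<and> cls (enz c) \<noteq> \<alpha>))"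

definition mavf :: "'c set \<Rightarrow> ('c \<Rightarrow> 's) \<Rightarrow> ('c \<Rightarrow> nat \<Rightarrow> 's) \<Rightarrow> ('c \<Rightarrow> nat \<Rightarrow> 's)
    \<Rightarrow> ('c \<Rightarrow> nat) \<Rightarrow> 's \<Rightarrow> ('s + 'c rlabel) mpoly" where
  "mavf C enz sub imd len i = (\<Sum>\<rho>\<in>rlabels C len.
      mp_monom (Poly_Mapping.single (Inr \<rho>) 1 + cmon (reactant enz sub imd \<rho>))
        (int (count_list (product enz sub imd \<rho>) i) - int (count_list (reactant enz sub imd \<rho>) i)))"

definition tderiv :: "'c set \<Rightarrow> ('c \<Rightarrow> 's) \<Rightarrow> ('c \<Rightarrow> nat \<Rightarrow> 's) \<Rightarrow> ('c \<Rightarrow> nat \<Rightarrow> 's)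
    \<Rightarrow> ('c \<Rightarrow> nat) \<Rightarrow> ('s + 'c rlabel) mpoly \<Rightarrow> ('s + 'c rlabel) mpoly" where
  "tderiv C enz sub imd len \<phi> = (\<Sum>i\<in>species C enz sub imd len.
      mp_pderiv (Inl i) \<phi> * mavf C enz sub imd len i)"

text \<open>The concentration monomial x^m appears in p iff its coefficient (a polynomial in the
rate constants) is nonzero, i.e. some monomial of p has species part m.\<close>
definition species_part_eq :: "('s + 'r \<Rightarrow>\<^sub>0 nat) \<Rightarrow> ('s + 'r \<Rightarrow>\<^sub>0 nat) \<Rightarrow> bool" where
  "species_part_eq \<mu> m \<longleftrightarrow> (\<forall>i. Poly_Mapping.lookup \<mu> (Inl i) = Poly_Mapping.lookup m (Inl i))"

definition appears :: "('s + 'r) mpoly \<Rightarrow> ('s + 'r \<Rightarrow>\<^sub>0 nat) \<Rightarrow> bool" where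
  "appears p m \<longleftrightarrow> (\<exists>\<mu>\<in>Poly_Mapping.keys p. species_part_eq \<mu> m)"

text \<open>The coefficient of x^m in p (a polynomial in the rate constants only) equals the
monomial q (given as exponent vector of rate variables) with coefficient 1.\<close>
definition xcoeff_is_monomial :: "('s + 'r) mpoly \<Rightarrow> ('s + 'r \<Rightarrow>\<^sub>0 nat) \<Rightarrow> ('s + 'r \<Rightarrow>\<^sub>0 nat) \<Rightarrow> bool" where
  "xcoeff_is_monomial p m q \<longleftrightarrow>
     (\<forall>\<mu>. species_part_eq \<mu> m \<longrightarrow> Poly_Mapping.lookup p \<mu> = (if \<mu> = m + q then 1 else 0))"

definition rvar :: "'r \<Rightarrow> ('s + 'r \<Rightarrow>\<^sub>0 nat)" where
  "rvar r = Poly_Mapping.single (Inr r) 1"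

end

theory Submission
  imports Defs
begin

text \<open>Each total derivative replaces one species factor of a monomial by the reactant complex of
a reaction changing that species and multiplies by the reaction's rate constant. Every reactant
complex contains a species other than Y, so a monomial with two factors other than y never again
has the form y^r v. A monomial y^a x with a single other factor x moves along the network: an
unbinding or catalytic step replaces x by an intermediate it is connected to, keeping a, and a
binding step in which Y is enzyme or substrate replaces x by the partner of Y, raising a by one.
By (H1) and (H2), reaching S_i from s_n costs at least 2(n - i) derivatives and n - i factors y,
and the only way to reach v_(n-k) within 2k + 1 derivatives is
s_n, u_n, y s_(n-1), ..., y^k s_(n-k), y^k v_(n-k), through the rates c_(n-j), a_(n-j) and finally
the unbinding rate of V_(n-k); the coefficient is the product of these rates.\<close>

lemma lookup_cmon_Inl:
  "Poly_Mapping.lookup (cmon y :: 's + 'r \<Rightarrow>\<^sub>0 nat) (Inl s) = count_list y s"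
  by (induct y) (auto simp: cmon_def lookup_add lookup_single when_def)

lemma lookup_tderiv:
  "Poly_Mapping.lookup (tderiv C enz sub imd len p) \<mu> =
   (\<Sum>i\<in>species C enz sub imd len. \<Sum>m\<in>Poly_Mapping.keys p. \<Sum>\<rho>\<in>rlabels C len.
     (if m - Poly_Mapping.single (Inl i) 1 + (Poly_Mapping.single (Inr \<rho>) 1 + cmon (reactant enz sub imd \<rho>)) = \<mu>
      then int (Poly_Mapping.lookup m (Inl i)) * Poly_Mapping.lookup p m *
        (int (count_list (product enz sub imd \<rho>) i) - int (count_list (reactant enz sub imd \<rho>) i))
      else 0))"
  unfolding tderiv_def mp_pderiv_def mavf_def mp_monom_def
  by (simp add: lookup_sum sum_product mult_single lookup_single when_def)

definition species_part :: "('s + 'r \<Rightarrow>\<^sub>0 nat) \<Rightarrow> 's \<Rightarrow> nat" where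
  "species_part \<mu> s = Poly_Mapping.lookup \<mu> (Inl s)"

lemma species_part_eq_iff: "species_part_eq \<mu> m \<longleftrightarrow> species_part \<mu> = species_part m"
  by (simp add: species_part_eq_def species_part_def fun_eq_iff)

text \<open>Differentiating a monomial with respect to the species i and multiplying by the
monomial of the reactant complex R replaces one factor i by the factors of R.\<close>

definition replace_species :: "('s \<Rightarrow> nat) \<Rightarrow> 's \<Rightarrow> 's list \<Rightarrow> 's \<Rightarrow> nat" where
  "replace_species f i R = (\<lambda>s. f s - (if s = i then 1 else 0) + count_list R s)"

lemma species_part_replace:
  assumes "1 \<le> Poly_Mapping.lookup m (Inl i)"
  shows "species_part (m - Poly_Mapping.single (Inl i) 1 + (Poly_Mapping.single (Inr \<rho>) 1 + cmon R))
    = replace_species (species_part m) i R"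
  using assms by (auto simp: species_part_def replace_species_def fun_eq_iff lookup_add lookup_minus
      lookup_single when_def lookup_cmon_Inl)

definition ypow_mon :: "'s \<Rightarrow> nat \<Rightarrow> 's \<Rightarrow> 's \<Rightarrow> nat" where
  "ypow_mon Y a x s = (if s = Y then a else if s = x then 1 else 0)"

definition nonY_degree_ge2 :: "'s \<Rightarrow> ('s \<Rightarrow> nat) \<Rightarrow> bool" where
  "nonY_degree_ge2 Y f \<longleftrightarrow>
     (\<exists>s t. s \<noteq> Y \<and> t \<noteq> Y \<and> s \<noteq> t \<and> 1 \<le> f s \<and> 1 \<le> f t) \<or> (\<exists>s. s \<noteq> Y \<and> 2 \<le> f s)"

lemma ypow_mon_inject:
  assumes "x \<noteq> Y" "x' \<noteq> Y"
  shows "ypow_mon Y a x = ypow_mon Y a' x' \<longleftrightarrow> a = a' \<and> x = x'"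
proof
  assume eq: "ypow_mon Y a x = ypow_mon Y a' x'"
  have "a = a'" using fun_cong[OF eq, of Y] by (simp add: ypow_mon_def)
  moreover have "x = x'" using fun_cong[OF eq, of x] assms by (simp add: ypow_mon_def split: if_splits)
  ultimately show "a = a' \<and> x = x'" ..
qed simp

lemma ypow_mon_pos: "1 \<le> ypow_mon Y a x i \<Longrightarrow> i = Y \<or> i = x"
  unfolding ypow_mon_def by (auto split: if_splits)

lemma nonY_degree_ge2_ne_ypow_mon: "x \<noteq> Y \<Longrightarrow> nonY_degree_ge2 Y f \<Longrightarrow> f \<noteq> ypow_mon Y a x"
  unfolding nonY_degree_ge2_def ypow_mon_def by (auto split: if_splits)

lemma ypow_mon_if_not_nonY_degree_ge2:
  assumes "z \<noteq> Y" "1 \<le> f z" "\<not> nonY_degree_ge2 Y f"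
  shows "f = ypow_mon Y (f Y) z"
proof
  fix s
  have "\<not> 2 \<le> f z" using assms unfolding nonY_degree_ge2_def by blast
  moreover have "\<not> 1 \<le> f s" if "s \<noteq> Y" "s \<noteq> z"
    using assms that unfolding nonY_degree_ge2_def by blast
  ultimately show "f s = ypow_mon Y (f Y) z s"
    using assms(2) unfolding ypow_mon_def by (auto simp: not_le)
qed

lemma nonY_degree_ge2_add:
  assumes "s \<noteq> Y" "t \<noteq> Y" "1 \<le> f s" "1 \<le> g t"
  shows "nonY_degree_ge2 Y (\<lambda>u. f u + g u)"
proof (cases "s = t")
  case True
  then have "2 \<le> f s + g s" using assms by simp
  then show ?thesis using assms(1) unfolding nonY_degree_ge2_def by blast
next
  case False
  have "1 \<le> f s + g s" "1 \<le> f t + g t" using assms by simp_all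
  then show ?thesis using assms(1,2) False unfolding nonY_degree_ge2_def by blast
qed

lemma nonY_degree_ge2_replace:
  assumes "nonY_degree_ge2 Y f" "1 \<le> f i" "z \<in> set R" "z \<noteq> Y"
  shows "nonY_degree_ge2 Y (replace_species f i R)"
proof -
  have "\<exists>s. s \<noteq> Y \<and> 1 \<le> f s - (if s = i then 1 else 0)"
    using assms(1) unfolding nonY_degree_ge2_def
  proof (elim disjE exE conjE)
    fix s t assume "s \<noteq> Y" "t \<noteq> Y" "s \<noteq> t" "1 \<le> f s" "1 \<le> f t"
    then show ?thesis
      by (cases "s = i") (auto intro: exI[of _ t] exI[of _ s])
  next
    fix s assume "s \<noteq> Y" "2 \<le> f s"
    then show ?thesis by (intro exI[of _ s]) auto
  qed
  then obtain s where "s \<noteq> Y" "1 \<le> f s - (if s = i then 1 else 0)" by blast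
  moreover have "1 \<le> count_list R z" using assms(3) count_list_0_iff[of R z] by simp
  ultimately show ?thesis
    unfolding replace_species_def
    using nonY_degree_ge2_add[of s Y z "\<lambda>u. f u - (if u = i then 1 else 0)" "count_list R"] assms(4)
    by blast
qed

lemma replace_ypow_mon_enzyme:
  assumes "x \<noteq> Y" "z \<in> set R" "z \<noteq> Y"
  shows "nonY_degree_ge2 Y (replace_species (ypow_mon Y a x) Y R)"
proof -
  have "1 \<le> count_list R z" using assms(2) count_list_0_iff[of R z] by simp
  moreover have "1 \<le> ypow_mon Y a x x - (if x = Y then 1 else 0)" using assms(1) by (simp add: ypow_mon_def)
  ultimately show ?thesis
    unfolding replace_species_def
    using nonY_degree_ge2_add[of x Y z "\<lambda>u. ypow_mon Y a x u - (if u = Y then 1 else 0)" "count_list R"] assms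
    by blast
qed

lemma replace_ypow_mon_two_nonY:
  "e \<noteq> Y \<Longrightarrow> b \<noteq> Y \<Longrightarrow> e \<noteq> b \<Longrightarrow> nonY_degree_ge2 Y (replace_species (ypow_mon Y a x) x [e, b])"
  unfolding nonY_degree_ge2_def replace_species_def ypow_mon_def
  by (intro disjI1 exI[of _ e] exI[of _ b]) auto

lemma replace_ypow_mon_Y_left:
  "b \<noteq> Y \<Longrightarrow> x \<noteq> Y \<Longrightarrow> replace_species (ypow_mon Y a x) x [Y, b] = ypow_mon Y (Suc a) b"
  by (auto simp: replace_species_def ypow_mon_def fun_eq_iff)

lemma replace_ypow_mon_Y_right:
  "b \<noteq> Y \<Longrightarrow> x \<noteq> Y \<Longrightarrow> replace_species (ypow_mon Y a x) x [b, Y] = ypow_mon Y (Suc a) b"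
  by (auto simp: replace_species_def ypow_mon_def fun_eq_iff)

lemma replace_ypow_mon_single:
  "w \<noteq> Y \<Longrightarrow> x \<noteq> Y \<Longrightarrow> replace_species (ypow_mon Y a x) x [w] = ypow_mon Y a w"
  by (auto simp: replace_species_def ypow_mon_def fun_eq_iff)

lemma lookup_rvar: "Poly_Mapping.lookup (rvar r) x = (if x = Inr r then 1 else 0)"
  by (simp add: rvar_def lookup_single)

lemma species_part_ypow_key:
  assumes "x \<noteq> Y" "\<And>s. Poly_Mapping.lookup q (Inl s) = 0"
  shows "species_part (Poly_Mapping.single (Inl Y) a + Poly_Mapping.single (Inl x) 1 + q)
    = ypow_mon Y a x"
  using assms by (auto simp: species_part_def ypow_mon_def fun_eq_iff lookup_add lookup_single when_def)

lemma appears_if_xcoeff_is_monomial: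
  assumes "xcoeff_is_monomial p m q" "\<And>s. Poly_Mapping.lookup q (Inl s) = 0"
  shows "appears p m"
proof -
  have "species_part_eq (m + q) m" using assms(2) by (simp add: species_part_eq_def lookup_add)
  moreover from this have "Poly_Mapping.lookup p (m + q) = 1"
    using assms(1) unfolding xcoeff_is_monomial_def by simp
  ultimately show ?thesis unfolding appears_def by (auto simp: in_keys_iff)
qed

locale enzyme_network =
  fixes C :: "'c set" and enz :: "'c \<Rightarrow> 's" and sub imd :: "'c \<Rightarrow> nat \<Rightarrow> 's"
    and len :: "'c \<Rightarrow> nat"
  assumes H1: "H1 C enz sub imd len"
begin

abbreviation "RL \<equiv> rlabels C len"
abbreviation "SP \<equiv> species C enz sub imd len"
abbreviation "react \<equiv> reactant enz sub imd"
abbreviation "D \<equiv> tderiv C enz sub imd len"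

lemma finite_C: "finite C"
  using H1 by (simp add: H1_def)

lemma imd_inj:
  "c \<in> C \<Longrightarrow> c' \<in> C \<Longrightarrow> 1 \<le> j \<Longrightarrow> j \<le> len c \<Longrightarrow> 1 \<le> j' \<Longrightarrow> j' \<le> len c'
   \<Longrightarrow> imd c j = imd c' j' \<Longrightarrow> c = c' \<and> j = j'"
  using H1 unfolding H1_def by (elim conjE) metis

lemma imd_ne_enz: "c \<in> C \<Longrightarrow> 1 \<le> j \<Longrightarrow> j \<le> len c \<Longrightarrow> c' \<in> C \<Longrightarrow> imd c j \<noteq> enz c'"
  using H1 unfolding H1_def by (elim conjE) blast

lemma imd_ne_sub:
  "c \<in> C \<Longrightarrow> 1 \<le> j \<Longrightarrow> j \<le> len c \<Longrightarrow> c' \<in> C \<Longrightarrow> i \<le> len c' \<Longrightarrow> imd c j \<noteq> sub c' i"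
  using H1 unfolding H1_def by (elim conjE) blast

lemma sub_inj: "c \<in> C \<Longrightarrow> i \<le> len c \<Longrightarrow> i' \<le> len c \<Longrightarrow> sub c i = sub c i' \<Longrightarrow> i = i'"
  using H1 unfolding H1_def inj_on_def by (elim conjE) (meson atLeastAtMost_iff zero_le)

lemma enz_ne_sub:
  assumes "c \<in> C" "i \<le> len c"
  shows "enz c \<noteq> sub c i"
proof -
  have "enz c \<notin> sub c ` {0..len c}" using H1 assms(1) unfolding H1_def by (elim conjE) blast
  then show ?thesis using assms(2) by auto
qed

lemma same_enzyme_substrate_same_component:
  "c \<in> C \<Longrightarrow> c' \<in> C \<Longrightarrow> j \<le> len c \<Longrightarrow> j' \<le> len c' \<Longrightarrow> enz c = enz c'
   \<Longrightarrow> sub c j = sub c' j' \<Longrightarrow> c = c'"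
  using H1 unfolding H1_def by metis

lemma finite_rlabels: "finite RL"
proof -
  have "(UNIV :: rkind set) = {RA, RB, RC}" by (auto intro: rkind.exhaust)
  then have "finite (UNIV :: rkind set)" by (metis finite.emptyI finite_insert)
  moreover have "RL = (SIGMA c:C. {1..len c} \<times> UNIV)" unfolding rlabels_def by auto
  ultimately show ?thesis using finite_C by (simp add: finite_SigmaI)
qed

lemma finite_species: "finite SP"
proof -
  have "{sub c j | c j. c \<in> C \<and> j \<le> len c} = (\<lambda>(c, j). sub c j) ` (SIGMA c:C. {..len c})"
    "{imd c j | c j. c \<in> C \<and> 1 \<le> j \<and> j \<le> len c} = (\<lambda>(c, j). imd c j) ` (SIGMA c:C. {1..len c})"
    by fastforce+
  then show ?thesis unfolding species_def using finite_C by auto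
qed

lemma in_rlabels: "c \<in> C \<Longrightarrow> 1 \<le> j \<Longrightarrow> j \<le> len c \<Longrightarrow> (c, j, \<kappa>) \<in> RL"
  unfolding rlabels_def by simp

lemma rlabelsE:
  assumes "\<rho> \<in> RL"
  obtains c j \<kappa> where "\<rho> = (c, j, \<kappa>)" "c \<in> C" "1 \<le> j" "j \<le> len c"
  using assms unfolding rlabels_def by auto

lemma reactant_has_other_species:
  assumes "Y \<notin> intermediates C imd len" "\<rho> \<in> RL"
  obtains z where "z \<in> set (react \<rho>)" "z \<noteq> Y"
proof -
  obtain c j \<kappa> where \<rho>: "\<rho> = (c, j, \<kappa>)" "c \<in> C" "1 \<le> j" "j \<le> len c"
    using assms(2) by (rule rlabelsE)
  have "imd c j \<noteq> Y" using assms(1) \<rho> unfolding intermediates_def by blast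
  moreover have "enz c \<noteq> sub c (j - 1)" using enz_ne_sub[OF \<rho>(2), of "j - 1"] \<rho> by simp
  ultimately show thesis using that \<rho> by (cases \<kappa>) auto
qed

definition net :: "'s \<Rightarrow> 'c rlabel \<Rightarrow> int" where
  "net i \<rho> = int (count_list (product enz sub imd \<rho>) i) - int (count_list (react \<rho>) i)"

lemma net_nonzero_mem: "net i \<rho> \<noteq> 0 \<Longrightarrow> i \<in> set (react \<rho>) \<or> i \<in> set (product enz sub imd \<rho>)"
  by (cases "i \<in> set (react \<rho>)"; cases "i \<in> set (product enz sub imd \<rho>)") (simp_all add: net_def)

definition succ_mon :: "('s + 'c rlabel \<Rightarrow>\<^sub>0 nat) \<Rightarrow> 's \<Rightarrow> 'c rlabel \<Rightarrow> ('s + 'c rlabel \<Rightarrow>\<^sub>0 nat)" where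
  "succ_mon m i \<rho> = m - Poly_Mapping.single (Inl i) 1 + (Poly_Mapping.single (Inr \<rho>) 1 + cmon (react \<rho>))"

lemma species_part_succ_mon:
  "1 \<le> Poly_Mapping.lookup m (Inl i) \<Longrightarrow>
   species_part (succ_mon m i \<rho>) = replace_species (species_part m) i (react \<rho>)"
  unfolding succ_mon_def by (rule species_part_replace)

lemma lookup_D:
  "Poly_Mapping.lookup (D p) \<mu> = (\<Sum>i\<in>SP. \<Sum>m\<in>Poly_Mapping.keys p. \<Sum>\<rho>\<in>RL.
     if succ_mon m i \<rho> = \<mu> then int (Poly_Mapping.lookup m (Inl i)) * Poly_Mapping.lookup p m * net i \<rho> else 0)"
  unfolding succ_mon_def net_def by (rule lookup_tderiv)

lemma keys_D_source:
  assumes "\<mu> \<in> Poly_Mapping.keys (D p)"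
  obtains i m \<rho> where "i \<in> SP" "m \<in> Poly_Mapping.keys p" "\<rho> \<in> RL" "succ_mon m i \<rho> = \<mu>"
    "1 \<le> Poly_Mapping.lookup m (Inl i)" "net i \<rho> \<noteq> 0"
proof -
  define F where "F i m \<rho> = (if succ_mon m i \<rho> = \<mu>
    then int (Poly_Mapping.lookup m (Inl i)) * Poly_Mapping.lookup p m * net i \<rho> else 0)" for i m \<rho>
  have "(\<Sum>i\<in>SP. \<Sum>m\<in>Poly_Mapping.keys p. \<Sum>\<rho>\<in>RL. F i m \<rho>) \<noteq> 0"
    using assms unfolding F_def by (simp add: in_keys_iff lookup_D)
  then obtain i where "i \<in> SP" "(\<Sum>m\<in>Poly_Mapping.keys p. \<Sum>\<rho>\<in>RL. F i m \<rho>) \<noteq> 0"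
    by (rule sum.not_neutral_contains_not_neutral)
  moreover from this(2) obtain m where "m \<in> Poly_Mapping.keys p" "(\<Sum>\<rho>\<in>RL. F i m \<rho>) \<noteq> 0"
    by (rule sum.not_neutral_contains_not_neutral)
  moreover from this(2) obtain \<rho> where "\<rho> \<in> RL" "F i m \<rho> \<noteq> 0"
    by (rule sum.not_neutral_contains_not_neutral)
  ultimately show thesis using that[of i m \<rho>] unfolding F_def by (simp split: if_splits)
qed

lemma lookup_D_unique_source:
  assumes unique: "\<And>i m \<rho>. i \<in> SP \<Longrightarrow> m \<in> Poly_Mapping.keys p \<Longrightarrow> \<rho> \<in> RL \<Longrightarrow> succ_mon m i \<rho> = \<mu>
      \<Longrightarrow> 1 \<le> Poly_Mapping.lookup m (Inl i) \<Longrightarrow> net i \<rho> \<noteq> 0 \<Longrightarrow> i = i0 \<and> m = K \<and> \<rho> = \<rho>0"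
    and "i0 \<in> SP" "K \<in> Poly_Mapping.keys p" "\<rho>0 \<in> RL" "succ_mon K i0 \<rho>0 = \<mu>"
  shows "Poly_Mapping.lookup (D p) \<mu> = int (Poly_Mapping.lookup K (Inl i0)) * Poly_Mapping.lookup p K * net i0 \<rho>0"
proof -
  let ?v = "int (Poly_Mapping.lookup K (Inl i0)) * Poly_Mapping.lookup p K * net i0 \<rho>0"
  have summand: "(if succ_mon m i \<rho> = \<mu>
      then int (Poly_Mapping.lookup m (Inl i)) * Poly_Mapping.lookup p m * net i \<rho> else 0)
    = (if \<rho> = \<rho>0 then if m = K then if i = i0 then ?v else 0 else 0 else 0)"
    if "i \<in> SP" "m \<in> Poly_Mapping.keys p" "\<rho> \<in> RL" for i m \<rho>
  proof (cases "i = i0 \<and> m = K \<and> \<rho> = \<rho>0")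
    case False
    then have "\<not> (succ_mon m i \<rho> = \<mu> \<and> 1 \<le> Poly_Mapping.lookup m (Inl i) \<and> net i \<rho> \<noteq> 0)"
      using unique that by blast
    then show ?thesis using False by auto
  qed (use assms(5) in auto)
  have "Poly_Mapping.lookup (D p) \<mu> = (\<Sum>i\<in>SP. \<Sum>m\<in>Poly_Mapping.keys p. \<Sum>\<rho>\<in>RL.
      if \<rho> = \<rho>0 then if m = K then if i = i0 then ?v else 0 else 0 else 0)"
    unfolding lookup_D using summand by (intro sum.cong refl) simp
  also have "\<dots> = ?v"
    using assms(2-4) finite_species finite_rlabels by simp
  finally show ?thesis .
qed

lemma nonY_degree_ge2_step:
  assumes "Y \<notin> intermediates C imd len" "\<rho> \<in> RL" "nonY_degree_ge2 Y f" "1 \<le> f i"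
  shows "nonY_degree_ge2 Y (replace_species f i (react \<rho>))"
  using reactant_has_other_species[OF assms(1,2)] nonY_degree_ge2_replace[OF assms(3,4)] by metis

lemma ypow_mon_replaced_species:
  assumes "Y \<notin> intermediates C imd len" "\<rho> \<in> RL" "x \<noteq> Y" "x' \<noteq> Y" "1 \<le> ypow_mon Y a x i"
    and "replace_species (ypow_mon Y a x) i (react \<rho>) = ypow_mon Y a' x'"
  shows "i = x"
proof (rule ccontr)
  assume "i \<noteq> x"
  then have "i = Y" using ypow_mon_pos assms(5) by metis
  obtain z where "z \<in> set (react \<rho>)" "z \<noteq> Y" using reactant_has_other_species[OF assms(1,2)] .
  then show False
    using replace_ypow_mon_enzyme[OF assms(3)] nonY_degree_ge2_ne_ypow_mon[OF assms(4)] assms(6) \<open>i = Y\<close>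
    by metis
qed

lemma ypow_mon_step_cases:
  assumes Y: "Y \<notin> intermediates C imd len" and \<rho>: "\<rho> \<in> RL" and x: "x \<noteq> Y" and x': "x' \<noteq> Y"
    and net: "net x \<rho> \<noteq> 0"
    and step: "replace_species (ypow_mon Y a x) x (react \<rho>) = ypow_mon Y a' x'"
  obtains (binding) c j where "\<rho> = (c, j, RA)" "c \<in> C" "1 \<le> j" "j \<le> len c" "a' = Suc a"
      "enz c = Y \<and> x' = sub c (j - 1) \<and> (x = sub c (j - 1) \<or> x = imd c j)
       \<or> sub c (j - 1) = Y \<and> x' = enz c \<and> (x = enz c \<or> x = imd c j)"
  | (unbinding) c j where "\<rho> = (c, j, RB)" "c \<in> C" "1 \<le> j" "j \<le> len c" "a' = a" "x' = imd c j"
      "x = imd c j \<or> x = enz c \<or> x = sub c (j - 1)"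
  | (catalysis) c j where "\<rho> = (c, j, RC)" "c \<in> C" "1 \<le> j" "j \<le> len c" "a' = a" "x' = imd c j"
      "x = imd c j \<or> x = enz c \<or> x = sub c j"
proof -
  obtain c j \<kappa> where r: "\<rho> = (c, j, \<kappa>)" "c \<in> C" "1 \<le> j" "j \<le> len c"
    using \<rho> by (rule rlabelsE)
  have mem: "x \<in> set (react \<rho>) \<or> x \<in> set (product enz sub imd \<rho>)" using net_nonzero_mem[OF net] .
  have es: "enz c \<noteq> sub c (j - 1)" using enz_ne_sub[OF r(2), of "j - 1"] r by simp
  have iY: "imd c j \<noteq> Y" using Y r unfolding intermediates_def by blast
  show thesis
  proof (cases \<kappa>)
    case RA
    have R: "react \<rho> = [enz c, sub c (j - 1)]" using r RA by simp
    consider "enz c = Y" | "sub c (j - 1) = Y" | "enz c \<noteq> Y" "sub c (j - 1) \<noteq> Y" by blast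
    then show thesis
    proof cases
      case 1
      then have b: "sub c (j - 1) \<noteq> Y" using es by simp
      have "ypow_mon Y a' x' = ypow_mon Y (Suc a) (sub c (j - 1))"
        using replace_ypow_mon_Y_left[OF b x] step R 1 by simp
      then have "a' = Suc a" "x' = sub c (j - 1)" using ypow_mon_inject[OF x' b] by auto
      then show thesis using binding r RA 1 mem x by auto
    next
      case 2
      then have b: "enz c \<noteq> Y" using es by simp
      have "ypow_mon Y a' x' = ypow_mon Y (Suc a) (enz c)"
        using replace_ypow_mon_Y_right[OF b x] step R 2 by simp
      then have "a' = Suc a" "x' = enz c" using ypow_mon_inject[OF x' b] by auto
      then show thesis using binding r RA 2 mem x by auto
    next
      case 3
      then show thesis
        using replace_ypow_mon_two_nonY[OF 3 es] nonY_degree_ge2_ne_ypow_mon[OF x'] step R by metis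
    qed
  next
    case RB
    have "ypow_mon Y a' x' = ypow_mon Y a (imd c j)"
      using replace_ypow_mon_single[OF iY x] step r RB by simp
    then have "a' = a" "x' = imd c j" using ypow_mon_inject[OF x' iY] by auto
    then show thesis using unbinding r RB mem by auto
  next
    case RC
    have "ypow_mon Y a' x' = ypow_mon Y a (imd c j)"
      using replace_ypow_mon_single[OF iY x] step r RC by simp
    then have "a' = a" "x' = imd c j" using ypow_mon_inject[OF x' iY] by auto
    then show thesis using catalysis r RC mem by auto
  qed
qed

end

locale opposite_components = enzyme_network C enz sub imd len
  for C :: "'c set" and enz :: "'c \<Rightarrow> 's" and sub imd :: "'c \<Rightarrow> nat \<Rightarrow> 's" and len +
  fixes c1 c2 :: 'c and L n :: nat
  assumes H2: "H2 C enz sub imd len"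
    and c1: "c1 \<in> C" and c2: "c2 \<in> C" and len_c1: "len c1 = L" and len_c2: "len c2 = L"
    and sub_c2: "\<forall>i\<le>L. sub c2 i = sub c1 (L - i)"
    and n: "1 \<le> n" "n \<le> L"
begin

abbreviation "Y \<equiv> enz c1"
abbreviation "Yt \<equiv> enz c2"
abbreviation "S \<equiv> sub c1"
abbreviation "U \<equiv> imd c1"

text \<open>The paper's V_j, formed from Yt + S_j and decaying to Yt + S_(j-1).\<close>
abbreviation "V j \<equiv> imd c2 (L + 1 - j)"

lemma S_ne_Y: "i \<le> L \<Longrightarrow> S i \<noteq> Y"
  using enz_ne_sub[OF c1] len_c1 by metis

lemma S_eq_iff: "i \<le> L \<Longrightarrow> i' \<le> L \<Longrightarrow> S i = S i' \<longleftrightarrow> i = i'"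
  using sub_inj[OF c1] len_c1 by auto

lemma S_ne_Yt: "i \<le> L \<Longrightarrow> S i \<noteq> Yt"
  using enz_ne_sub[OF c2, of "L - i"] len_c2 sub_c2 by simp

lemma S_ne_imd: "i \<le> L \<Longrightarrow> c \<in> C \<Longrightarrow> 1 \<le> j \<Longrightarrow> j \<le> len c \<Longrightarrow> S i \<noteq> imd c j"
  using imd_ne_sub[OF _ _ _ c1, of c j i] len_c1 by auto

lemma Y_not_intermediate: "Y \<notin> intermediates C imd len"
proof
  assume "Y \<in> intermediates C imd len"
  then obtain c j where "c \<in> C" "1 \<le> j" "j \<le> len c" "Y = imd c j"
    unfolding intermediates_def by blast
  then show False using imd_ne_enz[OF _ _ _ c1] by metis
qed

lemma Yt_ne_imd: "c \<in> C \<Longrightarrow> 1 \<le> j \<Longrightarrow> j \<le> len c \<Longrightarrow> Yt \<noteq> imd c j"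
  using imd_ne_enz[OF _ _ _ c2] by metis

lemma S_in_species: "i \<le> L \<Longrightarrow> S i \<in> SP"
  unfolding species_def using c1 len_c1 by blast

lemma U_in_species: "1 \<le> j \<Longrightarrow> j \<le> L \<Longrightarrow> U j \<in> SP"
  unfolding species_def using c1 len_c1 by blast

lemma U_facts:
  assumes "t < n"
  shows "1 \<le> n - t" "n - t \<le> len c1" "U (n - t) \<noteq> Y"
proof -
  show "1 \<le> n - t" "n - t \<le> len c1" using assms n len_c1 by auto
  then show "U (n - t) \<noteq> Y" using imd_ne_enz[OF c1 _ _ c1] by metis
qed

lemma V_facts:
  assumes "1 \<le> j" "j \<le> L"
  shows "1 \<le> L + 1 - j" "L + 1 - j \<le> len c2" "V j \<noteq> Y"
    "sub c2 (L + 1 - j - 1) = S j" "sub c2 (L + 1 - j) = S (j - 1)"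
proof -
  show "1 \<le> L + 1 - j" "L + 1 - j \<le> len c2" using assms len_c2 by auto
  then show "V j \<noteq> Y" using imd_ne_enz[OF c2 _ _ c1] by metis
  have "L + 1 - j - 1 = L - j" "L + 1 - j = L - (j - 1)" using assms by auto
  then show "sub c2 (L + 1 - j - 1) = S j" "sub c2 (L + 1 - j) = S (j - 1)"
    using sub_c2 assms by simp_all
qed

lemma V_ne_Y:
  assumes "k < n"
  shows "V (n - k) \<noteq> Y"
proof -
  have "1 \<le> n - k" "n - k \<le> L" using assms n by auto
  then show ?thesis by (rule V_facts(3))
qed

text \<open>By (H2) the substrates of c1 and of any component having Y among its substrates lie in
different classes.\<close>

lemma sub_ne_S_if_Y_substrate:
  assumes "c \<in> C" "j \<le> len c" "sub c j = Y" "j' \<le> len c" "i \<le> L"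
  shows "sub c j' \<noteq> S i"
proof
  assume eq: "sub c j' = S i"
  obtain cl :: "'s \<Rightarrow> nat"
    where cl: "\<forall>c\<in>C. \<exists>\<alpha>. 1 \<le> \<alpha> \<and> (\<forall>j\<le>len c. cl (sub c j) = \<alpha>) \<and> cl (enz c) \<noteq> \<alpha>"
    using H2 unfolding H2_def by blast
  obtain \<alpha>1 where "\<forall>j\<le>len c1. cl (S j) = \<alpha>1" "cl Y \<noteq> \<alpha>1" using cl c1 by blast
  moreover obtain \<alpha> where "\<forall>j\<le>len c. cl (sub c j) = \<alpha>" using cl assms(1) by blast
  ultimately show False using eq assms len_c1 by metis
qed

text \<open>A necessary condition for y^a x to occur in the l-th derivative of s_n: x is S_i or an
intermediate adjacent to S_i, and both l and a are large enough to have descended from S_n to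
S_i, where each descent S_i \<rightarrow> U_i \<rightarrow> S_(i-1) costs two derivatives and one factor y.\<close>

definition admissible_mon :: "nat \<Rightarrow> nat \<Rightarrow> 's \<Rightarrow> bool" where
  "admissible_mon l a x \<longleftrightarrow>
     (\<exists>i\<le>n. x = S i \<and> 2 * n \<le> l + 2 * i \<and> n \<le> a + i \<and> a + n \<le> l + i) \<or>
     (\<exists>c\<in>C. \<exists>j. 1 \<le> j \<and> j \<le> len c \<and> x = imd c j \<and>
        (\<exists>i\<le>n. (S i = enz c \<or> S i = sub c (j - 1) \<or> S i = sub c j) \<and>
           2 * n + 1 \<le> l + 2 * i \<and> n \<le> a + i \<and> a + n + 1 \<le> l + i))"

lemma admissible_monI_S:
  "i \<le> n \<Longrightarrow> 2 * n \<le> l + 2 * i \<Longrightarrow> n \<le> a + i \<Longrightarrow> a + n \<le> l + i \<Longrightarrow> admissible_mon l a (S i)"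
  unfolding admissible_mon_def by blast

lemma admissible_monI_imd:
  assumes "c \<in> C" "1 \<le> j" "j \<le> len c" "i \<le> n" "S i = enz c \<or> S i = sub c (j - 1) \<or> S i = sub c j"
    "2 * n + 1 \<le> l + 2 * i" "n \<le> a + i" "a + n + 1 \<le> l + i"
  shows "admissible_mon l a (imd c j)"
  unfolding admissible_mon_def using assms by blast

lemma admissible_monE:
  assumes "admissible_mon l a x"
  obtains (S) i where "i \<le> n" "x = S i" "2 * n \<le> l + 2 * i" "n \<le> a + i" "a + n \<le> l + i"
  | (imd) c j i where "c \<in> C" "1 \<le> j" "j \<le> len c" "x = imd c j" "i \<le> n"
      "S i = enz c \<or> S i = sub c (j - 1) \<or> S i = sub c j"
      "2 * n + 1 \<le> l + 2 * i" "n \<le> a + i" "a + n + 1 \<le> l + i"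
  using assms unfolding admissible_mon_def by (elim disjE bexE exE conjE) fast+

lemma admissible_mon_binding_enzyme:
  assumes c: "c \<in> C" "1 \<le> j" "j \<le> len c" and e: "enz c = Y" and adm: "admissible_mon l a x"
    and x: "x = sub c (j - 1) \<or> x = imd c j"
  shows "admissible_mon (Suc l) (Suc a) (sub c (j - 1))"
  using adm
proof (cases rule: admissible_monE)
  case (S i)
  then have "S i = sub c (j - 1)" using S_ne_imd[of i c j] c x n by auto
  moreover have "admissible_mon (Suc l) (Suc a) (S i)" by (rule admissible_monI_S) (use S in arith)+
  ultimately show ?thesis by simp
next
  case (imd c' j' i)
  have "x \<noteq> sub c (j - 1)" using imd_ne_sub[OF imd(1-3) c(1), of "j - 1"] imd(4) c by simp
  then have "c' = c" "j' = j" using imd_inj[OF imd(1) c(1) imd(2,3) c(2,3)] imd(4) x by auto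
  have iL: "i \<le> L" using imd(5) n by simp
  then consider "S i = sub c (j - 1)" | "S i = sub c j"
    using S_ne_Y e imd(6) \<open>c' = c\<close> \<open>j' = j\<close> by auto
  then show ?thesis
  proof cases
    case 1
    have "admissible_mon (Suc l) (Suc a) (S i)" by (rule admissible_monI_S) (use imd in arith)+
    then show ?thesis using 1 by simp
  next
    case 2
    have "c = c1" using same_enzyme_substrate_same_component[OF c(1) c1 c(3), of i] iL len_c1 e 2 by simp
    then have "j = i" using sub_inj[OF c1, of j i] 2 c iL len_c1 by simp
    then have "sub c (j - 1) = S (i - 1)" "1 \<le> i" using \<open>c = c1\<close> c by auto
    moreover have "admissible_mon (Suc l) (Suc a) (S (i - 1))"
      by (rule admissible_monI_S) (use imd \<open>1 \<le> i\<close> in arith)+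
    ultimately show ?thesis by simp
  qed
qed

lemma admissible_mon_binding_substrate:
  assumes c: "c \<in> C" "1 \<le> j" "j \<le> len c" and e: "sub c (j - 1) = Y" and adm: "admissible_mon l a x"
    and x: "x = enz c \<or> x = imd c j"
  shows "admissible_mon (Suc l) (Suc a) (enz c)"
  using adm
proof (cases rule: admissible_monE)
  case (S i)
  then have "S i = enz c" using S_ne_imd[of i c j] c x n by auto
  moreover have "admissible_mon (Suc l) (Suc a) (S i)" by (rule admissible_monI_S) (use S in arith)+
  ultimately show ?thesis by simp
next
  case (imd c' j' i)
  have "x \<noteq> enz c" using imd_ne_enz[OF imd(1-3) c(1)] imd(4) by simp
  then have "c' = c" "j' = j" using imd_inj[OF imd(1) c(1) imd(2,3) c(2,3)] imd(4) x by auto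
  have iL: "i \<le> L" using imd(5) n by simp
  have "S i \<noteq> sub c (j - 1)" using S_ne_Y[OF iL] e by simp
  moreover have "S i \<noteq> sub c j" using sub_ne_S_if_Y_substrate[OF c(1) _ e c(3) iL] c(3) by fastforce
  ultimately have "S i = enz c" using imd(6) \<open>c' = c\<close> \<open>j' = j\<close> by auto
  moreover have "admissible_mon (Suc l) (Suc a) (S i)" by (rule admissible_monI_S) (use imd in arith)+
  ultimately show ?thesis by simp
qed

lemma admissible_mon_intermediate:
  assumes c: "c \<in> C" "1 \<le> j" "j \<le> len c" and adm: "admissible_mon l a x"
    and x: "x = imd c j \<or> x = enz c \<or> x = sub c (j - 1) \<or> x = sub c j"
  shows "admissible_mon (Suc l) a (imd c j)"
  using adm
proof (cases rule: admissible_monE)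
  case (S i)
  then have "S i = enz c \<or> S i = sub c (j - 1) \<or> S i = sub c j" using S_ne_imd[of i c j] c x n by auto
  then show ?thesis by (rule admissible_monI_imd[OF c S(1)]) (use S in simp_all)
next
  case (imd c' j' i)
  have "x \<noteq> enz c" "x \<noteq> sub c (j - 1)" "x \<noteq> sub c j"
    using imd_ne_enz[OF imd(1-3) c(1)] imd_ne_sub[OF imd(1-3) c(1)] imd(4) c by auto
  then have "c' = c" "j' = j" using imd_inj[OF imd(1) c(1) imd(2,3) c(2,3)] imd(4) x by auto
  then show ?thesis by (intro admissible_monI_imd[OF c imd(5)]) (use imd in simp_all)
qed

lemma admissible_mon_step:
  assumes adm: "admissible_mon l a x" and x: "x \<noteq> Y" and x': "x' \<noteq> Y" and \<rho>: "\<rho> \<in> RL"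
    and net: "net x \<rho> \<noteq> 0" and step: "replace_species (ypow_mon Y a x) x (react \<rho>) = ypow_mon Y a' x'"
  shows "admissible_mon (Suc l) a' x'"
  using Y_not_intermediate \<rho> x x' net step
proof (cases rule: ypow_mon_step_cases)
  case (binding c j)
  then show ?thesis
    using admissible_mon_binding_enzyme[OF binding(2-4) _ adm]
      admissible_mon_binding_substrate[OF binding(2-4) _ adm] by auto
next
  case (unbinding c j)
  then show ?thesis using admissible_mon_intermediate[OF unbinding(2-4) adm] by auto
next
  case (catalysis c j)
  then show ?thesis using admissible_mon_intermediate[OF catalysis(2-4) adm] by auto
qed

text \<open>Monomials with two factors other than y (counted with multiplicity) are harmless: every
reactant complex contains a species other than y, so their descendants never have the form y^r v.\<close>

definition admissible :: "nat \<Rightarrow> ('s \<Rightarrow> nat) \<Rightarrow> bool" where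
  "admissible l f \<longleftrightarrow> nonY_degree_ge2 Y f \<or> (\<exists>a x. x \<noteq> Y \<and> f = ypow_mon Y a x \<and> admissible_mon l a x)"

lemma admissible_ypow_mon_iff: "x \<noteq> Y \<Longrightarrow> admissible l (ypow_mon Y a x) \<longleftrightarrow> admissible_mon l a x"
  unfolding admissible_def using nonY_degree_ge2_ne_ypow_mon ypow_mon_inject by metis

lemma admissible_predecessor:
  assumes "admissible l f" "\<rho> \<in> RL" "1 \<le> f i" "x' \<noteq> Y"
    and "replace_species f i (react \<rho>) = ypow_mon Y a' x'"
  obtains a where "f = ypow_mon Y a i" "i \<noteq> Y" "admissible_mon l a i"
proof -
  have "\<not> nonY_degree_ge2 Y f"
    using nonY_degree_ge2_step[OF Y_not_intermediate assms(2), of f i] assms(3)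
      nonY_degree_ge2_ne_ypow_mon[OF assms(4)] assms(5) by metis
  then obtain a x where "x \<noteq> Y" "f = ypow_mon Y a x" "admissible_mon l a x"
    using assms(1) unfolding admissible_def by blast
  moreover from this have "i = x"
    using ypow_mon_replaced_species[OF Y_not_intermediate assms(2) _ assms(4)] assms(3,5) by metis
  ultimately show thesis using that by blast
qed

lemma admissible_step:
  assumes adm: "admissible l f" and \<rho>: "\<rho> \<in> RL" and fi: "1 \<le> f i" and net: "net i \<rho> \<noteq> 0"
  shows "admissible (Suc l) (replace_species f i (react \<rho>))" (is "admissible _ ?g")
proof (cases "nonY_degree_ge2 Y ?g")
  case False
  obtain z where z: "z \<in> set (react \<rho>)" "z \<noteq> Y"
    using reactant_has_other_species[OF Y_not_intermediate \<rho>] .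
  then have "1 \<le> ?g z" using count_list_0_iff[of "react \<rho>" z] by (simp add: replace_species_def)
  then have g: "?g = ypow_mon Y (?g Y) z" using ypow_mon_if_not_nonY_degree_ge2 z(2) False by metis
  obtain a where "f = ypow_mon Y a i" "i \<noteq> Y" "admissible_mon l a i"
    using admissible_predecessor[OF adm \<rho> fi z(2) g] .
  then have "admissible_mon (Suc l) (?g Y) z"
    using admissible_mon_step[OF _ _ z(2) \<rho> net] g by metis
  then show ?thesis using g z(2) admissible_ypow_mon_iff by metis
qed (simp add: admissible_def)

definition tracks :: "nat \<Rightarrow> ('s + 'c rlabel \<Rightarrow>\<^sub>0 nat) \<Rightarrow> ('s \<Rightarrow> nat) \<Rightarrow> ('s + 'c rlabel) mpoly \<Rightarrow> bool" where
  "tracks l K T p \<longleftrightarrow> (\<forall>\<mu>\<in>Poly_Mapping.keys p. admissible l (species_part \<mu>)) \<and>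
     (\<forall>\<mu>. species_part \<mu> = T \<longrightarrow> Poly_Mapping.lookup p \<mu> = (if \<mu> = K then 1 else 0))"

lemma admissible_keys_D:
  assumes "\<And>m. m \<in> Poly_Mapping.keys p \<Longrightarrow> admissible l (species_part m)"
    and "\<mu> \<in> Poly_Mapping.keys (D p)"
  shows "admissible (Suc l) (species_part \<mu>)"
proof -
  obtain i m \<rho> where "i \<in> SP" "m \<in> Poly_Mapping.keys p" "\<rho> \<in> RL" "succ_mon m i \<rho> = \<mu>"
    "1 \<le> Poly_Mapping.lookup m (Inl i)" "net i \<rho> \<noteq> 0"
    using assms(2) by (rule keys_D_source)
  then show ?thesis using admissible_step[OF assms(1)] species_part_succ_mon by (metis species_part_def)
qed

lemma tracks_D:
  assumes tr: "tracks l K T p"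
    and unique: "\<And>f i \<rho>. admissible l f \<Longrightarrow> \<rho> \<in> RL \<Longrightarrow> 1 \<le> f i \<Longrightarrow> net i \<rho> \<noteq> 0
      \<Longrightarrow> replace_species f i (react \<rho>) = T' \<Longrightarrow> f = T \<and> i = i0 \<and> \<rho> = \<rho>0"
    and i0: "i0 \<in> SP" and \<rho>0: "\<rho>0 \<in> RL" and K: "species_part K = T"
    and K': "succ_mon K i0 \<rho>0 = K'" and coeff: "int (Poly_Mapping.lookup K (Inl i0)) * net i0 \<rho>0 = 1"
  shows "tracks (Suc l) K' T' (D p)"
proof -
  have adm: "admissible l (species_part m)" if "m \<in> Poly_Mapping.keys p" for m
    using tr that unfolding tracks_def by blast
  have lookup_T: "Poly_Mapping.lookup p m = (if m = K then 1 else 0)" if "species_part m = T" for m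
    using tr that unfolding tracks_def by blast
  then have pK: "Poly_Mapping.lookup p K = 1" using K by simp
  then have K_key: "K \<in> Poly_Mapping.keys p" by (simp add: in_keys_iff)
  have source: "i = i0 \<and> m = K \<and> \<rho> = \<rho>0"
    if "m \<in> Poly_Mapping.keys p" "\<rho> \<in> RL" "succ_mon m i \<rho> = \<mu>" "1 \<le> Poly_Mapping.lookup m (Inl i)"
      "net i \<rho> \<noteq> 0" "species_part \<mu> = T'" for i m \<rho> \<mu>
  proof -
    have "replace_species (species_part m) i (react \<rho>) = T'"
      using that species_part_succ_mon by metis
    then have "species_part m = T" "i = i0" "\<rho> = \<rho>0"
      using unique[OF adm[OF that(1)] that(2) _ that(5)] that(4) by (simp_all add: species_part_def)
    moreover from this(1) have "m = K" using lookup_T that(1) by (auto simp: in_keys_iff split: if_splits)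
    ultimately show ?thesis by simp
  qed
  have "Poly_Mapping.lookup (D p) \<mu> = (if \<mu> = K' then 1 else 0)" if "species_part \<mu> = T'" for \<mu>
  proof (cases "\<mu> = K'")
    case True
    then have "Poly_Mapping.lookup (D p) \<mu>
        = int (Poly_Mapping.lookup K (Inl i0)) * Poly_Mapping.lookup p K * net i0 \<rho>0"
      using source[of _ _ _ \<mu>] that by (intro lookup_D_unique_source[OF _ i0 K_key \<rho>0]) (auto simp: K')
    then show ?thesis using True coeff pK by simp
  next
    case False
    then have "\<mu> \<notin> Poly_Mapping.keys (D p)"
      using source[of _ _ _ \<mu>] that K' by (metis keys_D_source)
    then show ?thesis using False by (simp add: in_keys_iff)
  qed
  then show ?thesis using admissible_keys_D[OF adm] unfolding tracks_def by blast
qed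

lemma admissible_mon_S:
  assumes "i \<le> L" "admissible_mon l a (S i)"
  shows "i \<le> n \<and> 2 * n \<le> l + 2 * i \<and> n \<le> a + i \<and> a + n \<le> l + i"
  using assms(2)
proof (cases rule: admissible_monE)
  case (S i')
  then show ?thesis using S_eq_iff[of i' i] assms(1) n by auto
next
  case (imd c j i')
  then show ?thesis using S_ne_imd[OF assms(1) imd(1-3)] by simp
qed

lemma admissible_mon_U:
  assumes t: "t < n" and adm: "admissible_mon l a (U (n - t))"
  shows "2 * t + 1 \<le> l"
  using adm
proof (cases rule: admissible_monE)
  case (S i)
  then show ?thesis using S_ne_imd[OF _ c1 U_facts(1,2)[OF t], of i] n by simp
next
  case (imd c j i)
  then have "c = c1" "j = n - t" using imd_inj[OF imd(1) c1 imd(2,3) U_facts(1,2)[OF t]] by auto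
  moreover have "i \<le> L" using imd(5) n by simp
  ultimately have "i = n - t \<or> i = n - t - 1" using imd(6) S_ne_Y S_eq_iff n by auto
  then show ?thesis using imd t by auto
qed

lemma admissible_mon_V:
  assumes k: "k < n" and adm: "admissible_mon l a (V (n - k))"
  shows "2 * k + 1 \<le> l \<and> (l = 2 * k + 1 \<longrightarrow> a = k)"
proof -
  have Vj: "1 \<le> n - k" "n - k \<le> L" using k n by auto
  from adm show ?thesis
  proof (cases rule: admissible_monE)
    case (S i)
    then show ?thesis using S_ne_imd[OF _ c2 V_facts(1,2)[OF Vj], of i] n by simp
  next
    case (imd c j i)
    have "c = c2" "j = L + 1 - (n - k)"
      using imd_inj[OF imd(1) c2 imd(2,3) V_facts(1,2)[OF Vj]] imd(4) by auto
    moreover have "i \<le> L" using imd(5) n by simp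
    ultimately have "i = n - k \<or> i = n - k - 1"
      using imd(6) V_facts(4,5)[OF Vj] S_ne_Yt S_eq_iff n by auto
    then show ?thesis using imd k by auto
  qed
qed

lemma admissible_mon_imd_of_Y_substrate:
  assumes "c \<in> C" "1 \<le> j" "j \<le> len c" "sub c (j - 1) = Y" "admissible_mon l a (imd c j)"
  shows "\<exists>i\<le>n. S i = enz c \<and> 2 * n + 1 \<le> l + 2 * i"
  using assms(5)
proof (cases rule: admissible_monE)
  case (S i)
  then show ?thesis using S_ne_imd[of i c j] assms n by auto
next
  case (imd c' j' i)
  have "c' = c" "j' = j" using imd_inj[OF imd(1) assms(1) imd(2,3) assms(2,3)] imd(4) by auto
  have iL: "i \<le> L" using imd(5) n by simp
  have "S i \<noteq> sub c (j - 1)" using S_ne_Y[OF iL] assms(4) by simp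
  moreover have "S i \<noteq> sub c j" using sub_ne_S_if_Y_substrate[OF assms(1) _ assms(4,3) iL] assms(3) by fastforce
  ultimately have "S i = enz c" using imd(6) \<open>c' = c\<close> \<open>j' = j\<close> by auto
  then show ?thesis using imd by blast
qed

lemma not_admissible_mon_Yt: "\<not> admissible_mon l a Yt"
proof
  assume "admissible_mon l a Yt"
  then show False
  proof (cases rule: admissible_monE)
    case (S i)
    then show ?thesis using S_ne_Yt[of i] n by simp
  next
    case (imd c j i)
    then show ?thesis using Yt_ne_imd[of c j] by simp
  qed
qed

text \<open>key_S t, key_U t and key_V k are the monomials y^t s_(n-t), y^t u_(n-t) and
y^k v_(n-k) times the rate constants of the path from s_n to them.\<close>

definition path_rates :: "nat \<Rightarrow> ('s + 'c rlabel \<Rightarrow>\<^sub>0 nat)" where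
  "path_rates t = (\<Sum>j<t. rvar (c1, n - j, RA) + rvar (c1, n - j, RC))"

definition key_S :: "nat \<Rightarrow> ('s + 'c rlabel \<Rightarrow>\<^sub>0 nat)" where
  "key_S t = Poly_Mapping.single (Inl Y) t + Poly_Mapping.single (Inl (S (n - t))) 1 + path_rates t"

definition key_U :: "nat \<Rightarrow> ('s + 'c rlabel \<Rightarrow>\<^sub>0 nat)" where
  "key_U t = Poly_Mapping.single (Inl Y) t + Poly_Mapping.single (Inl (U (n - t))) 1
    + (path_rates t + rvar (c1, n - t, RC))"

definition key_V :: "nat \<Rightarrow> ('s + 'c rlabel \<Rightarrow>\<^sub>0 nat)" where
  "key_V k = Poly_Mapping.single (Inl Y) k + Poly_Mapping.single (Inl (V (n - k))) 1
    + (rvar (c2, L + 1 - (n - k), RB) + path_rates k)"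

lemma lookup_path_rates_Inl: "Poly_Mapping.lookup (path_rates t) (Inl s) = 0"
  by (simp add: path_rates_def lookup_sum lookup_add lookup_rvar)

lemma species_part_key_S: "t \<le> n \<Longrightarrow> species_part (key_S t) = ypow_mon Y t (S (n - t))"
  unfolding key_S_def using S_ne_Y n by (intro species_part_ypow_key) (auto simp: lookup_path_rates_Inl)

lemma species_part_key_U: "t < n \<Longrightarrow> species_part (key_U t) = ypow_mon Y t (U (n - t))"
  unfolding key_U_def using U_facts(3)
  by (intro species_part_ypow_key) (auto simp: lookup_add lookup_path_rates_Inl lookup_rvar)

lemma predecessor_U:
  assumes t: "t < n" and adm: "admissible (2 * t) f" and \<rho>: "\<rho> \<in> RL" and fi: "1 \<le> f i"
    and net: "net i \<rho> \<noteq> 0" and step: "replace_species f i (react \<rho>) = ypow_mon Y t (U (n - t))"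
  shows "f = ypow_mon Y t (S (n - t)) \<and> i = S (n - t) \<and> \<rho> = (c1, n - t, RC)"
proof -
  note U = U_facts[OF t]
  obtain a where f: "f = ypow_mon Y a i" "i \<noteq> Y" "admissible_mon (2 * t) a i"
    using admissible_predecessor[OF adm \<rho> fi U(3) step] .
  from Y_not_intermediate \<rho> f(2) U(3) net step[unfolded f(1)] show ?thesis
  proof (cases rule: ypow_mon_step_cases)
    case (binding c j)
    then show ?thesis using imd_ne_sub[OF c1 U(1,2) binding(2), of "j - 1"] imd_ne_enz[OF c1 U(1,2) binding(2)]
      by auto
  next
    case (unbinding c j)
    then have "c = c1" "j = n - t" using imd_inj[OF c1 _ U(1,2)] by metis+
    then have "i = U (n - t) \<or> i = S (n - t - 1)" using unbinding(7) f(2) by auto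
    moreover have "\<not> admissible_mon (2 * t) a (S (n - t - 1))"
    proof
      assume "admissible_mon (2 * t) a (S (n - t - 1))"
      from admissible_mon_S[OF _ this] show False using t n by linarith
    qed
    ultimately show ?thesis using admissible_mon_U[OF t, of "2 * t" a] f(3) by auto
  next
    case (catalysis c j)
    then have "c = c1" "j = n - t" using imd_inj[OF c1 _ U(1,2)] by metis+
    then have "i = U (n - t) \<or> i = S (n - t)" using catalysis(7) f(2) by auto
    then show ?thesis using admissible_mon_U[OF t, of "2 * t" a] f catalysis(1,5) \<open>c = c1\<close> \<open>j = n - t\<close> by auto
  qed
qed

lemma predecessor_S:
  assumes t: "t < n" and adm: "admissible (Suc (2 * t)) f" and \<rho>: "\<rho> \<in> RL" and fi: "1 \<le> f i"
    and net: "net i \<rho> \<noteq> 0" and step: "replace_species f i (react \<rho>) = ypow_mon Y (Suc t) (S (n - Suc t))"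
  shows "f = ypow_mon Y t (U (n - t)) \<and> i = U (n - t) \<and> \<rho> = (c1, n - t, RA)"
proof -
  have sL: "n - Suc t \<le> L" using n by simp
  obtain a where f: "f = ypow_mon Y a i" "i \<noteq> Y" "admissible_mon (Suc (2 * t)) a i"
    using admissible_predecessor[OF adm \<rho> fi S_ne_Y[OF sL] step] .
  have not_S: "\<not> admissible_mon (Suc (2 * t)) t (S (n - Suc t))"
  proof
    assume "admissible_mon (Suc (2 * t)) t (S (n - Suc t))"
    from admissible_mon_S[OF sL this] show False using t by linarith
  qed
  from Y_not_intermediate \<rho> f(2) S_ne_Y[OF sL] net step[unfolded f(1)] show ?thesis
  proof (cases rule: ypow_mon_step_cases)
    case (binding c j)
    have a: "a = t" using binding(5) by simp
    from binding(6) consider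
        (Y_enzyme) "enz c = Y" "S (n - Suc t) = sub c (j - 1)" "i = sub c (j - 1) \<or> i = imd c j"
      | (Y_substrate) "sub c (j - 1) = Y" "S (n - Suc t) = enz c" "i = enz c \<or> i = imd c j"
      by blast
    then show ?thesis
    proof cases
      case Y_enzyme
      note e = Y_enzyme(1) and x = Y_enzyme(2) and i = Y_enzyme(3)
      have "c = c1"
        using same_enzyme_substrate_same_component[OF binding(2) c1 _ _ e, of "j - 1" "n - Suc t"] x binding sL len_c1
        by simp
      then have "j = n - t"
        using sub_inj[OF c1, of "j - 1" "n - Suc t"] x binding(3,4) sL len_c1 t by simp
      have "i = imd c j" using i x not_S f(3) a by metis
      then show ?thesis using f(1) a binding(1) \<open>c = c1\<close> \<open>j = n - t\<close> by simp
    next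
      case Y_substrate
      note e = Y_substrate(1) and x = Y_substrate(2) and i = Y_substrate(3)
      have "i \<noteq> imd c j"
      proof
        assume "i = imd c j"
        then obtain i' where "i' \<le> n" "S i' = enz c" "2 * n + 1 \<le> Suc (2 * t) + 2 * i'"
          using admissible_mon_imd_of_Y_substrate[OF binding(2-4) e] f(3) by blast
        then show False using S_eq_iff[of i' "n - Suc t"] x sL n t by auto
      qed
      then show ?thesis using i x not_S a f(3) by metis
    qed
  next
    case (unbinding c j)
    then show ?thesis using S_ne_imd[OF sL unbinding(2-4)] by simp
  next
    case (catalysis c j)
    then show ?thesis using S_ne_imd[OF sL catalysis(2-4)] by simp
  qed
qed

lemma predecessor_V:
  assumes k: "k < n" and adm: "admissible (2 * k) f" and \<rho>: "\<rho> \<in> RL" and fi: "1 \<le> f i"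
    and net: "net i \<rho> \<noteq> 0" and step: "replace_species f i (react \<rho>) = ypow_mon Y k (V (n - k))"
  shows "f = ypow_mon Y k (S (n - k)) \<and> i = S (n - k) \<and> \<rho> = (c2, L + 1 - (n - k), RB)"
proof -
  have Vj: "1 \<le> n - k" "n - k \<le> L" using k n by auto
  note V = V_facts[OF Vj]
  obtain a where f: "f = ypow_mon Y a i" "i \<noteq> Y" "admissible_mon (2 * k) a i"
    using admissible_predecessor[OF adm \<rho> fi V(3) step] .
  have not_V: "\<not> admissible_mon (2 * k) a (V (n - k))" using admissible_mon_V[OF k, of "2 * k" a] by auto
  from Y_not_intermediate \<rho> f(2) V(3) net step[unfolded f(1)] show ?thesis
  proof (cases rule: ypow_mon_step_cases)
    case (binding c j)
    then show ?thesis using imd_ne_sub[OF c2 V(1,2) binding(2), of "j - 1"] imd_ne_enz[OF c2 V(1,2) binding(2)]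
      by auto
  next
    case (unbinding c j)
    then have "c = c2" "j = L + 1 - (n - k)" using imd_inj[OF c2 _ V(1,2)] by metis+
    then have "i = V (n - k) \<or> i = Yt \<or> i = S (n - k)" using unbinding(7) V(4) by auto
    then show ?thesis using not_V not_admissible_mon_Yt f unbinding(1,5) \<open>c = c2\<close> \<open>j = _\<close> by auto
  next
    case (catalysis c j)
    then have "c = c2" "j = L + 1 - (n - k)" using imd_inj[OF c2 _ V(1,2)] by metis+
    then have "i = V (n - k) \<or> i = Yt \<or> i = S (n - k - 1)" using catalysis(7) V(5) by auto
    moreover have "\<not> admissible_mon (2 * k) a (S (n - k - 1))"
    proof
      assume "admissible_mon (2 * k) a (S (n - k - 1))"
      from admissible_mon_S[OF _ this] show False using k n by linarith
    qed
    ultimately show ?thesis using not_V not_admissible_mon_Yt f(3) by auto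
  qed
qed

abbreviation "s_n \<equiv> mp_var (Inl (S n)) :: ('s + 'c rlabel) mpoly"

lemma tracks_sn: "tracks 0 (key_S 0) (ypow_mon Y 0 (S n)) s_n"
proof -
  have key: "key_S 0 = Poly_Mapping.single (Inl (S n)) 1" by (simp add: key_S_def path_rates_def)
  have "admissible_mon 0 0 (S n)" by (rule admissible_monI_S) auto
  then have "admissible 0 (ypow_mon Y 0 (S n))" using admissible_ypow_mon_iff S_ne_Y n by blast
  then show ?thesis
    using species_part_key_S[of 0] key unfolding tracks_def mp_var_def by (auto simp: lookup_single when_def)
qed

lemma tracks_U_of_S:
  assumes t: "t < n" and tr: "tracks (2 * t) (key_S t) (ypow_mon Y t (S (n - t))) p"
  shows "tracks (Suc (2 * t)) (key_U t) (ypow_mon Y t (U (n - t))) (D p)"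
proof (rule tracks_D[OF tr predecessor_U[OF t] S_in_species in_rlabels[OF c1 U_facts(1,2)[OF t]]])
  have nt: "n - t \<le> L" using n by simp
  then have SU: "S (n - t) \<noteq> U (n - t)" using S_ne_imd[OF _ c1 U_facts(1,2)[OF t]] by simp
  show "n - t \<le> L" by (rule nt)
  show "species_part (key_S t) = ypow_mon Y t (S (n - t))" using species_part_key_S t by simp
  then show "int (Poly_Mapping.lookup (key_S t) (Inl (S (n - t)))) * net (S (n - t)) (c1, n - t, RC) = 1"
    using S_ne_Y[OF nt] SU by (simp add: net_def species_part_def[symmetric] ypow_mon_def)
  show "succ_mon (key_S t) (S (n - t)) (c1, n - t, RC) = key_U t"
    by (rule poly_mapping_eqI) (auto simp: succ_mon_def key_S_def key_U_def lookup_add lookup_minus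
        lookup_single when_def lookup_path_rates_Inl lookup_rvar cmon_def split: sum.splits)
qed

lemma tracks_S_of_U:
  assumes t: "t < n" and tr: "tracks (Suc (2 * t)) (key_U t) (ypow_mon Y t (U (n - t))) p"
  shows "tracks (Suc (Suc (2 * t))) (key_S (Suc t)) (ypow_mon Y (Suc t) (S (n - Suc t))) (D p)"
proof (rule tracks_D[OF tr predecessor_S[OF t] U_in_species in_rlabels[OF c1 U_facts(1,2)[OF t]]])
  have "n - Suc t \<le> L" using n by simp
  then have US: "U (n - t) \<noteq> S (n - Suc t)" using S_ne_imd[OF _ c1 U_facts(1,2)[OF t]] by metis
  show "1 \<le> n - t" "n - t \<le> L" using t n by auto
  show "species_part (key_U t) = ypow_mon Y t (U (n - t))" using species_part_key_U t by simp
  then show "int (Poly_Mapping.lookup (key_U t) (Inl (U (n - t)))) * net (U (n - t)) (c1, n - t, RA) = 1"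
    using U_facts(3)[OF t] US by (simp add: net_def species_part_def[symmetric] ypow_mon_def)
  have "n - Suc t = n - t - 1" by simp
  then show "succ_mon (key_U t) (U (n - t)) (c1, n - t, RA) = key_S (Suc t)"
    by (intro poly_mapping_eqI) (auto simp: succ_mon_def key_S_def key_U_def path_rates_def lookup_add
        lookup_minus lookup_single when_def lookup_sum lookup_rvar cmon_def split: sum.splits)
qed

lemma tracks_V_of_S:
  assumes k: "k < n" and tr: "tracks (2 * k) (key_S k) (ypow_mon Y k (S (n - k))) p"
  shows "tracks (Suc (2 * k)) (key_V k) (ypow_mon Y k (V (n - k))) (D p)"
proof -
  have Vj: "1 \<le> n - k" "n - k \<le> L" using k n by auto
  note V = V_facts[OF Vj]
  show ?thesis
  proof (rule tracks_D[OF tr predecessor_V[OF k] S_in_species in_rlabels[OF c2 V(1,2)]])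
    show "n - k \<le> L" by (rule Vj(2))
    show "species_part (key_S k) = ypow_mon Y k (S (n - k))" using species_part_key_S k by simp
    then show "int (Poly_Mapping.lookup (key_S k) (Inl (S (n - k)))) * net (S (n - k)) (c2, L + 1 - (n - k), RB) = 1"
      using S_ne_Y[OF Vj(2)] S_ne_Yt[OF Vj(2)] S_ne_imd[OF Vj(2) c2 V(1,2)] V(4)
      by (simp add: net_def species_part_def[symmetric] ypow_mon_def)
    show "succ_mon (key_S k) (S (n - k)) (c2, L + 1 - (n - k), RB) = key_V k"
      by (rule poly_mapping_eqI) (auto simp: succ_mon_def key_S_def key_V_def lookup_add lookup_minus
          lookup_single when_def lookup_path_rates_Inl lookup_rvar cmon_def split: sum.splits)
  qed
qed

lemma tracks_even: "t < n \<Longrightarrow> tracks (2 * t) (key_S t) (ypow_mon Y t (S (n - t))) ((D ^^ (2 * t)) s_n)"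
proof (induction t)
  case 0
  then show ?case using tracks_sn by simp
next
  case (Suc t)
  then show ?case using tracks_S_of_U tracks_U_of_S by simp
qed

lemma tracks_odd: "t < n \<Longrightarrow> tracks (Suc (2 * t)) (key_U t) (ypow_mon Y t (U (n - t))) ((D ^^ Suc (2 * t)) s_n)"
  using tracks_U_of_S tracks_even by simp

lemma tracks_V: "k < n \<Longrightarrow> tracks (Suc (2 * k)) (key_V k) (ypow_mon Y k (V (n - k))) ((D ^^ Suc (2 * k)) s_n)"
  using tracks_V_of_S tracks_even by simp

lemma admissible_keys:
  assumes "l < 2 * n" "\<mu> \<in> Poly_Mapping.keys ((D ^^ l) s_n)"
  shows "admissible l (species_part \<mu>)"
proof -
  have t: "l div 2 < n" using assms(1) by simp
  consider "l = 2 * (l div 2)" | "l = Suc (2 * (l div 2))" by linarith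
  then show ?thesis
  proof cases
    case 1
    then show ?thesis using tracks_even[OF t] assms(2) unfolding tracks_def by metis
  next
    case 2
    then show ?thesis using tracks_odd[OF t] assms(2) unfolding tracks_def by metis
  qed
qed

abbreviation "yv_mon k r \<equiv> Poly_Mapping.single (Inl Y) r + Poly_Mapping.single (Inl (V (n - k))) 1
  :: 's + 'c rlabel \<Rightarrow>\<^sub>0 nat"

lemma species_part_yv_mon: "k < n \<Longrightarrow> species_part (yv_mon k r) = ypow_mon Y r (V (n - k))"
  using species_part_ypow_key[of "V (n - k)" Y 0 r] V_ne_Y by simp

lemma appears_admissible_mon:
  assumes "k < n" "l < 2 * n" "appears ((D ^^ l) s_n) (yv_mon k r)"
  shows "admissible_mon l r (V (n - k))"
proof -
  obtain \<mu> where "\<mu> \<in> Poly_Mapping.keys ((D ^^ l) s_n)" "species_part \<mu> = ypow_mon Y r (V (n - k))"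
    using assms(1,3) species_part_yv_mon unfolding appears_def species_part_eq_iff by metis
  then show ?thesis
    using admissible_keys[OF assms(2)] admissible_ypow_mon_iff V_ne_Y[OF assms(1)] by metis
qed

lemma not_appears_before:
  assumes "k < n" "l < 2 * k + 1"
  shows "\<not> appears ((D ^^ l) s_n) (yv_mon k r)"
proof
  assume "appears ((D ^^ l) s_n) (yv_mon k r)"
  moreover have "l < 2 * n" using assms by simp
  ultimately have "admissible_mon l r (V (n - k))" using appears_admissible_mon[OF assms(1)] by blast
  from admissible_mon_V[OF assms(1) this] show False using assms(2) by simp
qed

lemma appears_only_exponent:
  assumes "k < n" "appears ((D ^^ (2 * k + 1)) s_n) (yv_mon k r)"
  shows "r = k"
proof -
  have "2 * k + 1 < 2 * n" using assms(1) by simp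
  then have "admissible_mon (2 * k + 1) r (V (n - k))" using appears_admissible_mon[OF assms(1)] assms(2) by blast
  from admissible_mon_V[OF assms(1) this] show ?thesis by simp
qed

lemma xcoeff_first_appearance:
  assumes "k < n"
  shows "xcoeff_is_monomial ((D ^^ (2 * k + 1)) s_n) (yv_mon k k) (rvar (c2, L + 1 - (n - k), RB) + path_rates k)"
proof -
  have "key_V k = yv_mon k k + (rvar (c2, L + 1 - (n - k), RB) + path_rates k)" by (simp add: key_V_def)
  then show ?thesis
    using tracks_V[OF assms] species_part_yv_mon[OF assms]
    unfolding xcoeff_is_monomial_def tracks_def species_part_eq_iff by simp
qed

end

theorem mainTheorem14:
  fixes C :: "'c set" and enz :: "'c \<Rightarrow> 's" and sub imd :: "'c \<Rightarrow> nat \<Rightarrow> 's"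
    and len :: "'c \<Rightarrow> nat" and c1 c2 :: 'c and L n k :: nat
  assumes h1: "H1 C enz sub imd len"
    and h2: "H2 C enz sub imd len"
    and c1: "c1 \<in> C" and c2: "c2 \<in> C"
    and L: "1 \<le> L" and len1: "len c1 = L" and len2: "len c2 = L"
    \<comment> \<open>c2 is the component  Yt + S_L <=> V_L -> Yt + S_(L-1) <=> ... <=> V_1 -> Yt + S_0,
       with S_j = sub c1 j and V_j = imd c2 (L + 1 - j)\<close>
    and rev: "\<forall>i\<le>L. sub c2 i = sub c1 (L - i)"
    and n: "1 \<le> n" "n \<le> L" and k: "k < n"
  shows
    "(let D = tderiv C enz sub imd len;
          s_n = mp_var (Inl (sub c1 n));
          Y = enz c1;
          V = imd c2 (L + 1 - (n - k));
          mon = (\<lambda>r. Poly_Mapping.single (Inl Y) r + Poly_Mapping.single (Inl V) 1)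
      in (\<forall>l. 0 < l \<and> l < 2 * k + 1 \<longrightarrow> (\<forall>r. \<not> appears ((D ^^ l) s_n) (mon r)))
         \<and> appears ((D ^^ (2 * k + 1)) s_n) (mon k)
         \<and> (\<forall>r. appears ((D ^^ (2 * k + 1)) s_n) (mon r) \<longrightarrow> r = k)
         \<and> xcoeff_is_monomial ((D ^^ (2 * k + 1)) s_n) (mon k)
             (rvar (c2, L + 1 - (n - k), RB)
              + (\<Sum>j<k. rvar (c1, n - j, RA) + rvar (c1, n - j, RC))))"
proof -
  interpret opposite_components C enz sub imd len c1 c2 L n
    by unfold_locales (use assms in auto)
  have coeff: "xcoeff_is_monomial ((D ^^ (2 * k + 1)) s_n) (yv_mon k k)
      (rvar (c2, L + 1 - (n - k), RB) + path_rates k)"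
    by (rule xcoeff_first_appearance[OF k])
  then have "appears ((D ^^ (2 * k + 1)) s_n) (yv_mon k k)"
    by (rule appears_if_xcoeff_is_monomial) (simp add: lookup_add lookup_rvar lookup_path_rates_Inl)
  then show ?thesis
    using coeff not_appears_before[OF k] appears_only_exponent[OF k] unfolding Let_def path_rates_def by blast
qed

end
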